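(* Let $\lambda=\lambda(n)=\Theta(\log n)$, $\lambda\in[1..n]$. Consider the following hyper-heuristic maximizing $\mathrm{OneMax}$ on $\{0,1\}^n$. It keeps a single individual $x$, initialized uniformly at random. In each iteration it performs either one iteration of the $(1+1)$ EA or one iteration of the $(1+(\lambda,\lambda))$ GA with population size $\lambda$ on $x$, chosen as follows: the first iteration is a $(1+1)$ EA iteration; in every later iteration, if none of the previous $\lambda$ iterations produced a strict fitness improvement of $x$, it performs a $(1+(\lambda,\lambda))$ GA iteration, and otherwise a $(1+1)$ EA iteration. (Equivalently: on each fitness value it performs up to $\lambda$ iterations of the $(1+1)$ EA, and if none of them improves the fitness it performs $(1+(\lambda,\lambda))$ GA iterations until an improvement is found.) Then the expected number of fitness evaluations until the optimum $1^n$ is found is $O(n\log\log n)$.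
   Context: $\mathrm{OneMax}(x)=\sum_{i=1}^n x_i$, optimum $1^n$. A $(1+1)$ EA iteration on $x$: create one offspring by flipping each bit independently with probability $1/n$ and replace $x$ by it if its fitness is at least $f(x)$; cost 1 evaluation. A $(1+(\lambda,\lambda))$ GA iteration on $x$: sample $\ell\sim\mathrm{Bin}(n,\lambda/n)$, create $\lambda$ offspring independently each by flipping exactly $\ell$ uniformly random distinct positions of $x$, let $x'$ be a best one (ties uniformly at random); create $\lambda$ offspring independently, each taking per position the bit of $x'$ with probability $1/\lambda$ and the bit of $x$ otherwise; let $y$ be a best one; set $x\gets y$ if $f(y)\ge f(x)$; cost $2\lambda$ evaluations. *)

theory Defs
  imports "HOL-Probability.Probability" "HOL-Library.Landau_Symbols"
begin

definition onemax :: "bool list \<Rightarrow> nat" where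
  "onemax xs = length (filter id xs)"

fun pick_list :: "real \<Rightarrow> ('a \<times> 'a) list \<Rightarrow> 'a list pmf" where
  "pick_list p [] = return_pmf []"
| "pick_list p ((a,b) # r) =
     bind_pmf (bernoulli_pmf p) (\<lambda>c. bind_pmf (pick_list p r) (\<lambda>t.
       return_pmf ((if c then b else a) # t)))"

definition flip_each :: "real \<Rightarrow> bool list \<Rightarrow> bool list pmf" where
  "flip_each p xs = pick_list p (map (\<lambda>b. (b, \<not> b)) xs)"

definition crossover :: "real \<Rightarrow> bool list \<Rightarrow> bool list \<Rightarrow> bool list pmf" where
  "crossover p x y = pick_list p (zip x y)"

definition flip_exactly :: "nat \<Rightarrow> bool list \<Rightarrow> bool list pmf" where
  "flip_exactly l xs =
     map_pmf (\<lambda>S. map (\<lambda>i. if i \<in> S then \<not> xs ! i else xs ! i) [0..<length xs])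
       (pmf_of_set {S. S \<subseteq> {..<length xs} \<and> card S = l})"

fun iid_list :: "nat \<Rightarrow> 'a pmf \<Rightarrow> 'a list pmf" where
  "iid_list 0 p = return_pmf []"
| "iid_list (Suc k) p =
     bind_pmf p (\<lambda>a. bind_pmf (iid_list k p) (\<lambda>as. return_pmf (a # as)))"

definition best_of :: "bool list list \<Rightarrow> bool list pmf" where
  "best_of ys = map_pmf (\<lambda>i. ys ! i)
     (pmf_of_set {i. i < length ys \<and> onemax (ys ! i) = Max (onemax ` set ys)})"

text \<open>One iteration of the (1+1) EA (cost 1 evaluation).\<close>
definition ea_iter :: "nat \<Rightarrow> bool list \<Rightarrow> bool list pmf" where
  "ea_iter n x = map_pmf (\<lambda>y. if onemax y \<ge> onemax x then y else x)
                   (flip_each (1 / real n) x)"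

text \<open>One iteration of the (1+(lambda,lambda)) GA (cost 2 lambda evaluations).\<close>
definition ga_iter :: "nat \<Rightarrow> nat \<Rightarrow> bool list \<Rightarrow> bool list pmf" where
  "ga_iter n lam x =
     bind_pmf (binomial_pmf n (real lam / real n)) (\<lambda>l.
     bind_pmf (bind_pmf (iid_list lam (flip_exactly l x)) best_of) (\<lambda>x'.
     bind_pmf (bind_pmf (iid_list lam (crossover (1 / real lam) x x')) best_of) (\<lambda>y.
     return_pmf (if onemax y \<ge> onemax x then y else x))))"

text \<open>Hyper-heuristic state: current individual and the number c of consecutive
  iterations without strict fitness improvement since the last improvement
  (or since initialization), capped at lam.\<close>
definition hh_step :: "nat \<Rightarrow> nat \<Rightarrow> bool list \<times> nat \<Rightarrow> (bool list \<times> nat) pmf" where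
  "hh_step n lam s = (case s of (x, c) \<Rightarrow>
     map_pmf (\<lambda>y. (y, if onemax y > onemax x then 0 else min lam (Suc c)))
       (if c < lam then ea_iter n x else ga_iter n lam x))"

definition hh_cost :: "nat \<Rightarrow> bool list \<times> nat \<Rightarrow> nat" where
  "hh_cost lam s = (if snd s < lam then 1 else 2 * lam)"

definition hh_dist :: "nat \<Rightarrow> nat \<Rightarrow> nat \<Rightarrow> (bool list \<times> nat) pmf" where
  "hh_dist n lam t =
     ((\<lambda>d. bind_pmf d (hh_step n lam)) ^^ t)
       (map_pmf (\<lambda>x. (x, 0)) (pmf_of_set {xs. length xs = n}))"

definition hh_runtime :: "nat \<Rightarrow> nat \<Rightarrow> ennreal" where
  "hh_runtime n lam =
     (\<Sum>t. \<integral>\<^sup>+ s. (if onemax (fst s) = n then 0 else ennreal (real (hh_cost lam s)))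
             \<partial>measure_pmf (hh_dist n lam t))"

end

(*
  On the fitness level with d zero-bits, an iteration of the (1+1) EA improves with probability
  at least p = e^-2 d/n, and for lam >= 8 an iteration of the (1+(lam,lam)) GA improves with
  probability at least q = Omega(1 - exp (-d lam^2 / 8n)): with probability at least 1/2 the
  mutation strength l lies in [lam/8, 3 lam]; then some of the lam mutants, and hence the best
  one, flips a zero-bit with probability at least 1 - (1 - d/n)^(l lam), and one of the lam
  crossover offspring takes exactly that bit from the mutant with constant probability.

  A potential charging each state the expected cost of finishing its current level, given the
  number c of failures there, plus the cost of every lower level entered afresh, decreases in
  expectation by at least the cost of each iteration.  Hence the expected runtime is at most the
  sum over d of the fresh level costs min lam (1/p) + (1 - p)^lam 2 lam / q, which is
  O(n log lam + n + n log n / lam), i.e. O(n log log n) for lam = Theta(log n).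
*)
theory Submission
  imports Defs "HOL-Real_Asymp.Real_Asymp"
begin

section \<open>Elementary estimates\<close>

lemma one_minus_power_le_exp:
  fixes a :: real
  assumes "a \<le> 1"
  shows "(1 - a) ^ k \<le> exp (- (a * real k))"
proof -
  have "(1 - a) ^ k \<le> exp (- a) ^ k"
    using assms exp_ge_add_one_self[of "- a"] by (intro power_mono) auto
  then show ?thesis
    by (simp add: exp_of_nat_mult[symmetric] mult_ac)
qed

lemma exp_le_one_minus_power:
  fixes x :: real
  assumes "0 \<le> x" "x \<le> 1/2"
  shows "exp (- (real k * (x + 2 * x\<^sup>2))) \<le> (1 - x) ^ k"
proof -
  have "real k * (- x - 2 * x\<^sup>2) \<le> real k * ln (1 - x)"
    using ln_one_minus_pos_lower_bound[OF assms] by (intro mult_left_mono) auto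
  moreover have "(1 - x) ^ k = exp (real k * ln (1 - x))"
    using assms by (simp add: ln_realpow[symmetric])
  ultimately show ?thesis
    by (simp add: algebra_simps)
qed

lemma inverse_one_minus_exp_neg_le:
  fixes y :: real
  assumes "0 < y"
  shows "1 / (1 - exp (- y)) \<le> 1 + 1 / y"
proof -
  have "exp (- y) \<le> 1 / (1 + y)"
    using assms exp_ge_add_one_self[of y] by (simp add: exp_minus field_simps)
  then have "y / (1 + y) \<le> 1 - exp (- y)"
    using assms by (simp add: field_simps)
  then have "1 / (1 - exp (- y)) \<le> 1 / (y / (1 + y))"
    using assms by (intro divide_left_mono) auto
  then show ?thesis
    using assms by (simp add: field_simps)
qed

lemma min_le_harmonic_mean:
  fixes u v :: real
  assumes "0 < u" "0 < v"
  shows "min u v \<le> 2 / (1 / u + 1 / v)"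
  using assms by (cases "u \<le> v") (auto simp: field_simps)

lemma one_add_mult_min_le_min:
  fixes p L :: real
  assumes "0 < p" "p \<le> 1" "1 \<le> L"
  shows "1 + (1 - p) * min (L - 1) (1 / p) \<le> min L (1 / p)"
proof (cases "L \<le> 1 / p")
  case True
  have "(1 - p) * min (L - 1) (1 / p) \<le> 1 * (L - 1)"
    using assms by (intro mult_mono) auto
  then show ?thesis
    using True by simp
next
  case False
  have "(1 - p) * min (L - 1) (1 / p) \<le> (1 - p) * (1 / p)"
    using assms by (intro mult_left_mono) auto
  also have "\<dots> = 1 / p - 1"
    using assms by (simp add: field_simps)
  finally show ?thesis
    using False by simp
qed

lemma choose_mult_power_le:
  assumes "m \<le> n"
  shows "real (m choose l) * real n ^ l \<le> real (n choose l) * real m ^ l"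
proof (induction l)
  case (Suc l)
  have shift: "real (Suc l) * (real (k choose Suc l) * real N ^ Suc l) =
      (real (k - l) * real N) * (real (k choose l) * real N ^ l)" for k N
  proof -
    have "real (Suc l) * real (k choose Suc l) = real (k - l) * real (k choose l)"
      using binomial_absorption[of l k] binomial_absorb_comp[of k l] by (metis of_nat_mult)
    then show ?thesis
      by (simp only: power_Suc mult.assoc[symmetric]) (simp add: mult_ac)
  qed
  have "real (m - l) * real n \<le> real (n - l) * real m"
    using assms by (cases "l \<le> m") (auto simp: of_nat_diff algebra_simps mult_left_mono)
  then have "real (Suc l) * (real (m choose Suc l) * real n ^ Suc l) \<le>
      real (Suc l) * (real (n choose Suc l) * real m ^ Suc l)"
    unfolding shift by (rule mult_mono[OF _ Suc]) auto
  then show ?case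
    by (simp del: of_nat_Suc)
qed simp

lemma sum_inverse_add_le_ln:
  fixes b :: real
  assumes "0 < b"
  shows "(\<Sum>d\<in>{1..n}. 1 / (real d + b)) \<le> ln (real n + b) - ln b"
proof (induction n)
  case (Suc n)
  let ?y = "real (Suc n) + b"
  have "ln ((?y - 1) / ?y) \<le> (?y - 1) / ?y - 1"
    using assms by (intro ln_le_minus_one) auto
  then have "1 / ?y \<le> ln ?y - ln (real n + b)"
    using assms by (simp add: ln_div field_simps)
  then show ?case
    using Suc by simp
qed simp

lemma sum_exp_neg_mult_le:
  fixes t :: real
  assumes "0 < t"
  shows "(\<Sum>d\<in>{1..n}. exp (- (t * real d))) \<le> 1 / t"
proof -
  have "(\<Sum>d\<in>{1..n}. exp (- (t * real d))) \<le> (1 - exp (- (t * real n))) / t"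
  proof (induction n)
    case (Suc n)
    have "(1 + t) * exp (- (t * real (Suc n))) \<le> exp t * exp (- (t * real (Suc n)))"
      by (intro mult_right_mono) (auto simp: add.commute)
    also have "\<dots> = exp (- (t * real n))"
      by (simp add: exp_add[symmetric] algebra_simps)
    finally have "exp (- (t * real (Suc n))) \<le>
        (exp (- (t * real n)) - exp (- (t * real (Suc n)))) / t"
      using assms by (simp add: field_simps)
    then show ?case
      using Suc by (simp add: diff_divide_distrib)
  qed simp
  also have "\<dots> \<le> 1 / t"
    using assms by (intro divide_right_mono) auto
  finally show ?thesis .
qed

lemma ln_one_plus_le_ln_ln:
  fixes l c L :: real
  assumes "0 \<le> l" "l \<le> c * L" "exp 1 \<le> L"
  shows "ln (1 + l) \<le> (ln (1 + c) + 1) * ln L"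
proof -
  have "1 \<le> exp (1::real)"
    by simp
  then have L: "1 \<le> L"
    using assms(3) by linarith
  have lnL: "1 \<le> ln L"
    using assms(3) L by (subst ln_ge_iff) auto
  have c: "0 \<le> c"
  proof (rule ccontr)
    assume "\<not> 0 \<le> c"
    then have "c * L < 0"
      using L by (simp add: mult_neg_pos)
    then show False
      using assms by linarith
  qed
  have "1 + l \<le> (1 + c) * L"
    using assms L by (simp add: algebra_simps)
  then have "ln (1 + l) \<le> ln ((1 + c) * L)"
    using assms c L by (subst ln_le_cancel_iff) auto
  also have "\<dots> = ln (1 + c) + ln L"
    using c L by (simp add: ln_mult)
  also have "\<dots> \<le> (ln (1 + c) + 1) * ln L"
    using c lnL mult_left_mono[of 1 "ln L" "ln (1 + c)"] by (simp add: algebra_simps)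
  finally show ?thesis .
qed

lemma ln_add_one_le_two_ln:
  fixes x :: real
  assumes "2 \<le> x"
  shows "ln (x + 1) \<le> 2 * ln x"
proof -
  have "2 * x \<le> x * x"
    using assms by (intro mult_right_mono) auto
  then have "x + 1 \<le> x ^ 2"
    using assms unfolding power2_eq_square by linarith
  then have "ln (x + 1) \<le> ln (x ^ 2)"
    using assms by (subst ln_le_cancel_iff) auto
  then show ?thesis
    using assms by (simp add: ln_realpow)
qed

lemma measure_pmf_Compl: "measure_pmf.prob M (- A) = 1 - measure_pmf.prob M A"
  using measure_pmf.prob_compl[of A M] by (simp add: Compl_eq_Diff_UNIV)

lemma measure_pmf_eq_1_if_set_pmf_subset: "set_pmf M \<subseteq> A \<Longrightarrow> measure_pmf.prob M A = 1"
  by (subst measure_pmf.prob_eq_1) (auto simp: AE_measure_pmf_iff)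

lemma measure_bind_pmf_ge:
  assumes "\<And>x. x \<in> set_pmf M \<Longrightarrow> x \<in> B \<Longrightarrow> c \<le> measure_pmf.prob (N x) A" "0 \<le> c"
  shows "c * measure_pmf.prob M B \<le> measure_pmf.prob (bind_pmf M N) A"
proof -
  have "ennreal (c * measure_pmf.prob M B) = (\<integral>\<^sup>+x. ennreal c * indicator B x \<partial>M)"
    using assms(2)
    by (simp add: ennreal_mult measure_pmf.emeasure_eq_measure nn_integral_cmult_indicator)
  also have "\<dots> \<le> (\<integral>\<^sup>+x. emeasure (N x) A \<partial>M)"
    using assms(1)
    by (intro nn_integral_mono_AE)
      (auto simp: AE_measure_pmf_iff indicator_def measure_pmf.emeasure_eq_measure)
  also have "\<dots> = emeasure (bind_pmf M N) A"
    by simp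
  finally show ?thesis
    by (simp add: measure_pmf.emeasure_eq_measure)
qed

lemma iid_list_eq_replicate_pmf: "iid_list k p = replicate_pmf k p"
  by (induction k) auto

lemma set_pmf_iid_list: "set_pmf (iid_list k p) = {xs \<in> lists (set_pmf p). length xs = k}"
  by (simp add: iid_list_eq_replicate_pmf set_replicate_pmf)

lemma emeasure_iid_list_lists: "emeasure (iid_list k M) (lists A) = emeasure M A ^ k"
proof (induction k)
  case (Suc k)
  have "(\<integral>\<^sup>+as. indicator (lists A) (a # as) \<partial>iid_list k M) =
      (\<integral>\<^sup>+as. indicator A a * indicator (lists A) as \<partial>iid_list k M)" for a
    by (intro nn_integral_cong) (simp add: indicator_def)
  then show ?case
    by (simp add: nn_integral_cmult Suc nn_integral_multc mult.commute)
qed simp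

lemma measure_iid_list_ex:
  "measure_pmf.prob (iid_list k M) {as. \<exists>a\<in>set as. a \<in> A} =
     1 - (1 - measure_pmf.prob M A) ^ k"
proof -
  have "measure_pmf.prob (iid_list k M) (lists (- A)) = (1 - measure_pmf.prob M A) ^ k"
    using emeasure_iid_list_lists[of k M "- A"]
    by (simp add: measure_pmf.emeasure_eq_measure ennreal_power measure_pmf_Compl)
  moreover have "{as. \<exists>a\<in>set as. a \<in> A} = - lists (- A)"
    by auto
  ultimately show ?thesis
    by (simp add: measure_pmf_Compl)
qed

lemma suminf_nn_integral_le_potential:
  fixes step :: "'s \<Rightarrow> 's pmf" and D :: "nat \<Rightarrow> 's pmf"
  assumes D: "\<And>t. D (Suc t) = bind_pmf (D t) step"
    and init: "set_pmf (D 0) \<subseteq> I" and closed: "\<And>s. s \<in> I \<Longrightarrow> set_pmf (step s) \<subseteq> I"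
    and drift: "\<And>s. s \<in> I \<Longrightarrow> f s + (\<integral>\<^sup>+y. g y \<partial>step s) \<le> g s"
  shows "(\<Sum>t. \<integral>\<^sup>+s. f s \<partial>D t) \<le> (\<integral>\<^sup>+s. g s \<partial>D 0)"
proof (rule suminf_le_const)
  have inv: "set_pmf (D t) \<subseteq> I" for t
    using init closed by (induction t) (auto simp: D)
  have "(\<Sum>t<T. \<integral>\<^sup>+s. f s \<partial>D t) + (\<integral>\<^sup>+s. g s \<partial>D T) \<le> (\<integral>\<^sup>+s. g s \<partial>D 0)" for T
  proof (induction T)
    case (Suc T)
    have "(\<integral>\<^sup>+s. f s \<partial>D T) + (\<integral>\<^sup>+s. g s \<partial>D (Suc T)) =
        (\<integral>\<^sup>+s. f s + (\<integral>\<^sup>+y. g y \<partial>step s) \<partial>D T)"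
      by (simp add: D nn_integral_add)
    also have "\<dots> \<le> (\<integral>\<^sup>+s. g s \<partial>D T)"
      using inv drift by (intro nn_integral_mono_AE) (auto simp: AE_measure_pmf_iff)
    finally show ?case
      using Suc by (simp add: add.assoc) (meson add_left_mono order_trans)
  qed simp
  then show "(\<Sum>t<T. \<integral>\<^sup>+s. f s \<partial>D t) \<le> (\<integral>\<^sup>+s. g s \<partial>D 0)" for T
    by (meson add_increasing2 order_trans zero_le order.refl)
qed simp

section \<open>Tails of the binomial distribution\<close>

lemma measure_pmf_le_expectation:
  assumes "finite (set_pmf M)" "\<And>x. x \<in> A \<Longrightarrow> 1 \<le> f x" "\<And>x. 0 \<le> f x"
  shows "measure_pmf.prob M A \<le> measure_pmf.expectation M f"
proof -
  have "measure_pmf.prob M A = measure_pmf.expectation M (indicator A)"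
    by simp
  also have "\<dots> \<le> measure_pmf.expectation M f"
    using assms by (intro integral_mono integrable_measure_pmf_finite) (auto simp: indicator_def)
  finally show ?thesis .
qed

lemma expectation_binomial_pmf_power:
  assumes "0 \<le> p" "p \<le> 1"
  shows "measure_pmf.expectation (binomial_pmf n p) (\<lambda>l. t ^ l) = (p * t + (1 - p)) ^ n"
  using assms
  by (simp add: expectation_binomial_pmf' binomial_ring atLeast0AtMost power_mult_distrib mult_ac)

text \<open>Chernoff-type tail bounds via the moment generating functions at \<open>t = exp (-1)\<close>
  and \<open>t = 2\<close>.\<close>
lemma binomial_pmf_lower_tail:
  assumes "1 \<le> lam" "lam \<le> n"
  shows "measure_pmf.prob (binomial_pmf n (real lam / real n)) {l. 8 * l < lam} \<le>
    exp (- 3 * real lam / 8)"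
proof -
  let ?p = "real lam / real n" and ?e = "exp (-1) :: real"
  have p: "0 \<le> ?p" "?p \<le> 1"
    using assms by auto
  have mix: "?p * ?e + (1 - ?p) = 1 - ?p * (1 - ?e)"
    by (simp add: right_diff_distrib)
  have "measure_pmf.prob (binomial_pmf n ?p) {l. 8 * l < lam} \<le>
      measure_pmf.expectation (binomial_pmf n ?p) (\<lambda>l. exp (real lam / 8) * ?e ^ l)"
    using p by (intro measure_pmf_le_expectation)
      (auto simp: exp_of_nat_mult[symmetric] exp_add[symmetric])
  also have "\<dots> = exp (real lam / 8) * (1 - ?p * (1 - ?e)) ^ n"
    using expectation_binomial_pmf_power[OF p, of n ?e] unfolding mix by simp
  also have "\<dots> \<le> exp (real lam / 8) * exp (- (?p * (1 - ?e) * real n))"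
    using p by (intro mult_left_mono one_minus_power_le_exp mult_le_one) auto
  also have "\<dots> \<le> exp (- 3 * real lam / 8)"
  proof -
    have "?e \<le> 1/2"
      using exp_ge_add_one_self[of 1] by (simp add: exp_minus field_simps)
    then have "real lam / 8 + - (real lam * (1 - ?e)) \<le> - 3 * real lam / 8"
      by (simp add: algebra_simps mult_left_le)
    moreover have "?p * (1 - ?e) * real n = real lam * (1 - ?e)"
      using assms by simp
    ultimately show ?thesis
      by (simp only: exp_add[symmetric] exp_le_cancel_iff)
  qed
  finally show ?thesis .
qed

lemma binomial_pmf_upper_tail:
  assumes "1 \<le> lam" "lam \<le> n"
  shows "measure_pmf.prob (binomial_pmf n (real lam / real n)) {l. 3 * lam < l} \<le> (3/8) ^ lam"
proof -
  let ?p = "real lam / real n"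
  have p: "0 \<le> ?p" "?p \<le> 1"
    using assms by auto
  have "measure_pmf.prob (binomial_pmf n ?p) {l. 3 * lam < l} \<le>
      measure_pmf.expectation (binomial_pmf n ?p) (\<lambda>l. (1/8) ^ lam * 2 ^ l)"
  proof (intro measure_pmf_le_expectation)
    fix l assume "l \<in> {l. 3 * lam < l}"
    then have "(8::real) ^ lam \<le> 2 ^ l"
      using power_increasing[of "3 * lam" l "2::real"] by (simp add: power_mult)
    then show "1 \<le> (1/8::real) ^ lam * 2 ^ l"
      by (simp add: field_simps)
  qed (use p in auto)
  also have "\<dots> = (1/8) ^ lam * (1 + ?p) ^ n"
    using expectation_binomial_pmf_power[OF p, of n 2] by (simp add: algebra_simps)
  also have "\<dots> \<le> (1/8) ^ lam * exp (real lam)"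
  proof -
    have "(1 - (- ?p)) ^ n \<le> exp (- (- ?p * real n))"
      using p by (intro one_minus_power_le_exp) linarith
    then have "(1 + ?p) ^ n \<le> exp (real lam)"
      using assms by simp
    then show ?thesis
      by (intro mult_left_mono) auto
  qed
  also have "\<dots> \<le> (1/8) ^ lam * 3 ^ lam"
  proof -
    have "exp (real lam) = exp 1 ^ lam"
      by (simp add: exp_of_nat_mult[symmetric])
    also have "\<dots> \<le> 3 ^ lam"
      by (intro power_mono exp_le) auto
    finally show ?thesis
      by simp
  qed
  also have "\<dots> = (3/8) ^ lam"
    by (simp add: power_mult_distrib[symmetric])
  finally show ?thesis .
qed

lemma binomial_pmf_concentration:
  assumes "8 \<le> lam" "lam \<le> n"
  shows "1/2 \<le> measure_pmf.prob (binomial_pmf n (real lam / real n)) {l. lam \<le> 8 * l \<and> l \<le> 3 * lam}"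
proof -
  let ?M = "binomial_pmf n (real lam / real n)"
  have "- {l. lam \<le> 8 * l \<and> l \<le> 3 * lam} = {l. 8 * l < lam} \<union> {l. 3 * lam < l}"
    by auto
  then have "measure_pmf.prob ?M (- {l. lam \<le> 8 * l \<and> l \<le> 3 * lam}) \<le>
      measure_pmf.prob ?M {l. 8 * l < lam} + measure_pmf.prob ?M {l. 3 * lam < l}"
    by (simp add: measure_Un_le)
  also have "\<dots> \<le> exp (- 3 * real lam / 8) + (3/8) ^ lam"
    using assms by (intro add_mono binomial_pmf_lower_tail binomial_pmf_upper_tail) auto
  also have "\<dots> \<le> 1/4 + 1/4"
  proof (intro add_mono)
    have "exp (- 3 * real lam / 8) \<le> exp (-3)"
      using assms by simp
    also have "\<dots> = inverse (exp 1 ^ 3)"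
      by (simp add: exp_minus exp_of_nat_mult[symmetric])
    also have "\<dots> \<le> inverse (2 ^ 3)"
      using exp_ge_add_one_self[of 1] by (intro le_imp_inverse_le power_mono) auto
    finally show "exp (- 3 * real lam / 8) \<le> 1/4"
      by simp
    have "(3/8::real) ^ lam \<le> (3/8) ^ 2"
      using assms by (intro power_decreasing) auto
    then show "(3/8::real) ^ lam \<le> 1/4"
      by (simp add: power2_eq_square)
  qed
  finally show ?thesis
    by (simp add: measure_pmf_Compl)
qed

definition diff_positions :: "bool list \<Rightarrow> bool list \<Rightarrow> nat set" where
  "diff_positions x y = {i. i < length x \<and> x ! i \<noteq> y ! i}"

definition gained_positions :: "bool list \<Rightarrow> bool list \<Rightarrow> nat set" where
  "gained_positions x y = {i. i < length x \<and> \<not> x ! i \<and> y ! i}"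

definition lost_positions :: "bool list \<Rightarrow> bool list \<Rightarrow> nat set" where
  "lost_positions x y = {i. i < length x \<and> x ! i \<and> \<not> y ! i}"

lemma onemax_eq_card: "onemax x = card {i. i < length x \<and> x ! i}"
  unfolding onemax_def by (simp add: length_filter_conv_card)

lemma onemax_le_length: "onemax x \<le> length x"
  unfolding onemax_def by simp

lemma card_false_positions: "card {i. i < length x \<and> \<not> x ! i} = length x - onemax x"
proof -
  have "{..<length x} = {i. i < length x \<and> x ! i} \<union> {i. i < length x \<and> \<not> x ! i}"
    by auto
  then have "length x = card {i. i < length x \<and> x ! i} + card {i. i < length x \<and> \<not> x ! i}"
    by (metis (no_types, lifting) card_lessThan card_Un_disjoint disjoint_iff finite_Un
        finite_lessThan mem_Collect_eq)
  then show ?thesis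
    by (simp add: onemax_eq_card)
qed

lemma onemax_list_update_True:
  assumes "j < length x" "\<not> x ! j"
  shows "onemax (x[j := True]) = Suc (onemax x)"
proof -
  have "{i. i < length x \<and> x[j := True] ! i} = insert j {i. i < length x \<and> x ! i}"
    using assms by (auto simp: nth_list_update)
  then show ?thesis
    using assms by (simp add: onemax_eq_card)
qed

lemma onemax_add_card_lost_positions:
  assumes "length y = length x"
  shows "onemax y + card (lost_positions x y) = onemax x + card (gained_positions x y)"
proof -
  let ?both = "{i. i < length x \<and> x ! i \<and> y ! i}"
  have "card {i. i < length x \<and> y ! i} = card ?both + card (gained_positions x y)"
    by (subst card_Un_disjoint[symmetric])
      (auto simp: gained_positions_def intro: arg_cong[where f = card])
  moreover have "card {i. i < length x \<and> x ! i} = card ?both + card (lost_positions x y)"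
    by (subst card_Un_disjoint[symmetric])
      (auto simp: lost_positions_def intro: arg_cong[where f = card])
  ultimately show ?thesis
    using assms by (simp add: onemax_eq_card)
qed

lemma card_diff_positions:
  "card (diff_positions x y) = card (lost_positions x y) + card (gained_positions x y)"
proof -
  have "diff_positions x y = lost_positions x y \<union> gained_positions x y"
    by (auto simp: diff_positions_def lost_positions_def gained_positions_def)
  then show ?thesis
    by (simp add: card_Un_disjoint lost_positions_def gained_positions_def disjoint_iff)
qed

lemma card_gained_positions_mono:
  assumes "length y = length x" "length z = length x"
    and "card (diff_positions x y) = card (diff_positions x z)" "onemax y \<le> onemax z"
  shows "card (gained_positions x y) \<le> card (gained_positions x z)"
  using assms onemax_add_card_lost_positions[of y x] onemax_add_card_lost_positions[of z x]
    card_diff_positions[of x y] card_diff_positions[of x z]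
  by linarith

lemma set_pmf_best_of:
  assumes "ys \<noteq> []" "y \<in> set_pmf (best_of ys)"
  shows "y \<in> set ys" "\<And>z. z \<in> set ys \<Longrightarrow> onemax z \<le> onemax y"
proof -
  let ?I = "{i. i < length ys \<and> onemax (ys ! i) = Max (onemax ` set ys)}"
  have "Max (onemax ` set ys) \<in> onemax ` set ys"
    using assms(1) by (intro Max_in) auto
  then obtain z where "z \<in> set ys" "onemax z = Max (onemax ` set ys)"
    by auto
  then have "?I \<noteq> {}"
    by (auto simp: in_set_conv_nth)
  then obtain i where "i \<in> ?I" "y = ys ! i"
    using assms(2) by (auto simp: best_of_def)
  then show "y \<in> set ys" "\<And>z. z \<in> set ys \<Longrightarrow> onemax z \<le> onemax y"
    by auto
qed

text \<open>The left-hand side is the probability that some sample lies in \<open>A\<close>; the best sample is then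
  at least as fit.\<close>
lemma measure_best_of_iid_list_ge:
  assumes "\<And>a y. a \<in> A \<Longrightarrow> a \<in> set_pmf M \<Longrightarrow> y \<in> set_pmf M \<Longrightarrow> onemax a \<le> onemax y \<Longrightarrow> y \<in> T"
  shows "1 - (1 - measure_pmf.prob M A) ^ k \<le>
    measure_pmf.prob (bind_pmf (iid_list k M) best_of) T"
proof -
  have "1 - (1 - measure_pmf.prob M A) ^ k =
      1 * measure_pmf.prob (iid_list k M) {as. \<exists>a\<in>set as. a \<in> A}"
    by (simp add: measure_iid_list_ex)
  also have "\<dots> \<le> measure_pmf.prob (bind_pmf (iid_list k M) best_of) T"
  proof (rule measure_bind_pmf_ge)
    fix ys assume ys: "ys \<in> set_pmf (iid_list k M)" "ys \<in> {as. \<exists>a\<in>set as. a \<in> A}"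
    then obtain a where a: "a \<in> set ys" "a \<in> A"
      by auto
    have "set_pmf (best_of ys) \<subseteq> T"
      using ys a assms set_pmf_best_of[of ys] by (fastforce simp: set_pmf_iid_list)
    then show "1 \<le> measure_pmf.prob (best_of ys) T"
      by (simp add: measure_pmf_eq_1_if_set_pmf_subset)
  qed simp
  finally show ?thesis .
qed

lemma pick_list_Cons_map_pmf:
  "pick_list p ((a, b) # r) =
     bind_pmf (bernoulli_pmf p) (\<lambda>c. map_pmf (Cons (if c then b else a)) (pick_list p r))"
  by (simp add: map_pmf_def)

lemma length_pick_list: "ys \<in> set_pmf (pick_list p ps) \<Longrightarrow> length ys = length ps"
  by (induction ps arbitrary: ys) (auto simp: pick_list_Cons_map_pmf)

lemma length_flip_each: "y \<in> set_pmf (flip_each p x) \<Longrightarrow> length y = length x"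
  unfolding flip_each_def by (drule length_pick_list) simp

lemma length_crossover:
  "y \<in> set_pmf (crossover p x x') \<Longrightarrow> length x' = length x \<Longrightarrow> length y = length x"
  unfolding crossover_def by (drule length_pick_list) simp

definition pick_weight :: "real \<Rightarrow> 'a \<times> 'a \<Rightarrow> 'a \<Rightarrow> real" where
  "pick_weight p ab y = (if y = snd ab then p else 0) + (if y = fst ab then 1 - p else 0)"

lemma pmf_pick_list:
  assumes "0 \<le> p" "p \<le> 1"
  shows "pmf (pick_list p ps) ys =
    (if length ys = length ps then \<Prod>i<length ps. pick_weight p (ps ! i) (ys ! i) else 0)"
proof (induction ps arbitrary: ys)
  case Nil
  then show ?case by (auto simp: indicator_def)
next
  case (Cons ab r)
  obtain a b where ab: "ab = (a, b)" by (cases ab)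
  show ?case
  proof (cases ys)
    case Nil
    then show ?thesis using length_pick_list[of ys p "ab # r"] by (auto simp: set_pmf_iff)
  next
    case (Cons y ys')
    have pmf_Cons: "pmf (map_pmf (Cons h) (pick_list p r)) (y # ys') =
        (if y = h then pmf (pick_list p r) ys' else 0)" for h
      by (cases "y = h") (auto simp: pmf_map_inj' pmf_eq_0_set_pmf)
    have "pmf (pick_list p (ab # r)) ys = pick_weight p (a, b) y * pmf (pick_list p r) ys'"
      unfolding ab pick_list_Cons_map_pmf Cons pmf_bind using assms
      by (simp add: pmf_Cons pick_weight_def algebra_simps)
    then show ?thesis
      using Cons.IH[of ys'] unfolding Cons ab
      by (simp add: prod.lessThan_Suc_shift del: prod.lessThan_Suc)
  qed
qed

lemma pmf_pick_list_single_switch: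
  assumes "0 \<le> p" "p \<le> 1" "j < length ps" "fst (ps ! j) \<noteq> snd (ps ! j)"
  shows "pmf (pick_list p ps) ((map fst ps)[j := snd (ps ! j)]) =
    p * (1 - p) ^ (card {i. i < length ps \<and> fst (ps ! i) \<noteq> snd (ps ! i)} - 1)"
proof -
  let ?D = "{i. i < length ps \<and> fst (ps ! i) \<noteq> snd (ps ! i)}"
  let ?f = "\<lambda>i. if fst (ps ! i) = snd (ps ! i) then 1 else 1 - p"
  have "pmf (pick_list p ps) ((map fst ps)[j := snd (ps ! j)]) =
      (\<Prod>i<length ps. if i = j then p else ?f i)"
    using assms by (simp add: pmf_pick_list, intro prod.cong) (auto simp: pick_weight_def)
  also have "\<dots> = p * (\<Prod>i\<in>{..<length ps} - {j}. ?f i)"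
    using assms(3) by (subst prod.remove[of _ j]) auto
  also have "(\<Prod>i\<in>{..<length ps} - {j}. ?f i) = (\<Prod>i\<in>?D - {j}. 1 - p)"
    by (rule prod.mono_neutral_cong_right) auto
  also have "\<dots> = (1 - p) ^ (card ?D - 1)"
    using assms by simp
  finally show ?thesis .
qed

lemma pmf_flip_each_single_flip:
  assumes "0 \<le> p" "p \<le> 1" "j < length x"
  shows "pmf (flip_each p x) (x[j := \<not> x ! j]) = p * (1 - p) ^ (length x - 1)"
proof -
  let ?ps = "map (\<lambda>b. (b, \<not> b)) x"
  have "{i. i < length ?ps \<and> fst (?ps ! i) \<noteq> snd (?ps ! i)} = {..<length x}"
    by auto
  then show ?thesis
    using pmf_pick_list_single_switch[OF assms(1,2), of j ?ps] assms(3)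
    by (simp add: flip_each_def comp_def)
qed

lemma pmf_crossover_single_switch:
  assumes "0 \<le> p" "p \<le> 1" "j < length x" "length x' = length x" "x ! j \<noteq> x' ! j"
  shows "pmf (crossover p x x') (x[j := x' ! j]) = p * (1 - p) ^ (card (diff_positions x x') - 1)"
proof -
  have "{i. i < length (zip x x') \<and> fst (zip x x' ! i) \<noteq> snd (zip x x' ! i)} = diff_positions x x'"
    using assms(4) by (auto simp: diff_positions_def)
  then show ?thesis
    using pmf_pick_list_single_switch[OF assms(1,2), of j "zip x x'"] assms(3-5)
    by (simp add: crossover_def)
qed

lemma set_pmf_flip_exactly:
  assumes "l \<le> length x"
  shows "set_pmf (flip_exactly l x) =
    (\<lambda>S. map (\<lambda>i. if i \<in> S then \<not> x ! i else x ! i) [0..<length x]) `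
      {S. S \<subseteq> {..<length x} \<and> card S = l}"
proof -
  have "finite {S. S \<subseteq> {..<length x} \<and> card S = l}"
    by (rule finite_subset[of _ "Pow {..<length x}"]) auto
  moreover have "{S. S \<subseteq> {..<length x} \<and> card S = l} \<noteq> {}"
    using assms obtain_subset_with_card_n[of l "{..<length x}"] by auto
  ultimately show ?thesis
    unfolding flip_exactly_def by simp
qed

lemma set_pmf_flip_exactlyD:
  assumes "l \<le> length x" "m \<in> set_pmf (flip_exactly l x)"
  shows "length m = length x" "card (diff_positions x m) = l"
proof -
  obtain S where S: "S \<subseteq> {..<length x}" "card S = l"
    "m = map (\<lambda>i. if i \<in> S then \<not> x ! i else x ! i) [0..<length x]"
    using assms set_pmf_flip_exactly by auto
  then have "diff_positions x m = S"
    by (auto simp: diff_positions_def)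
  then show "length m = length x" "card (diff_positions x m) = l"
    using S by simp_all
qed

section \<open>Success probability of the (1+1) EA\<close>

lemma set_pmf_ea_iter:
  "y \<in> set_pmf (ea_iter n x) \<Longrightarrow> length y = length x \<and> onemax x \<le> onemax y"
  unfolding ea_iter_def by (auto dest: length_flip_each)

lemma measure_ea_iter_improve:
  assumes "length x = n"
  shows "real (n - onemax x) * (1 / real n * (1 - 1 / real n) ^ (n - 1)) \<le>
    measure_pmf.prob (ea_iter n x) {y. onemax x < onemax y}"
proof -
  let ?p = "1 / real n"
  let ?Z = "{j. j < n \<and> \<not> x ! j}"
  let ?F = "(\<lambda>j. x[j := True]) ` ?Z"
  have inj: "inj_on (\<lambda>j. x[j := True]) ?Z"
  proof (rule inj_onI)
    fix i j assume "i \<in> ?Z" "j \<in> ?Z" "x[i := True] = x[j := True]"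
    then show "i = j"
      using assms by (metis mem_Collect_eq nth_list_update_eq nth_list_update_neq)
  qed
  have "pmf (flip_each ?p x) (x[j := True]) = ?p * (1 - ?p) ^ (n - 1)" if "j \<in> ?Z" for j
    using that assms pmf_flip_each_single_flip[of ?p j x] by simp
  then have "measure_pmf.prob (flip_each ?p x) ?F = (\<Sum>j\<in>?Z. ?p * (1 - ?p) ^ (n - 1))"
    using inj by (simp add: measure_measure_pmf_finite sum.reindex)
  also have "\<dots> = real (n - onemax x) * (?p * (1 - ?p) ^ (n - 1))"
    using card_false_positions[of x] assms by simp
  finally have F: "measure_pmf.prob (flip_each ?p x) ?F = \<dots>" .
  have "?F \<subseteq> (\<lambda>y. if onemax x \<le> onemax y then y else x) -` {y. onemax x < onemax y}"
    using assms onemax_list_update_True by auto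
  then show ?thesis
    unfolding ea_iter_def measure_map_pmf F[symmetric]
    by (rule measure_pmf.finite_measure_mono) simp
qed

definition ea_success_lb :: "nat \<Rightarrow> nat \<Rightarrow> real" where
  "ea_success_lb n d = real d * exp (-2) / real n"

lemma ea_success_lb_pos: "1 \<le> d \<Longrightarrow> 1 \<le> n \<Longrightarrow> 0 < ea_success_lb n d"
  by (simp add: ea_success_lb_def)

lemma ea_success_lb_le_1: "d \<le> n \<Longrightarrow> ea_success_lb n d \<le> 1"
  using mult_left_le[of "exp (-2)" "real d"]
  by (cases "n = 0") (auto simp: ea_success_lb_def field_simps)

lemma ea_success_lb_le_measure_ea_iter:
  assumes "length x = n" "2 \<le> n"
  shows "ea_success_lb n (n - onemax x) \<le> measure_pmf.prob (ea_iter n x) {y. onemax x < onemax y}"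
proof -
  let ?p = "1 / real n"
  have "real (n - 1) * (?p + 2 * ?p\<^sup>2) \<le> real n * (?p + 2 * ?p\<^sup>2)"
    by (intro mult_right_mono) auto
  also have "\<dots> \<le> 2"
    using assms by (simp add: power2_eq_square field_simps)
  finally have "exp (-2) \<le> exp (- (real (n - 1) * (?p + 2 * ?p\<^sup>2)))"
    by simp
  also have "\<dots> \<le> (1 - ?p) ^ (n - 1)"
    using assms by (intro exp_le_one_minus_power) auto
  finally have "real (n - onemax x) * (?p * exp (-2)) \<le>
      real (n - onemax x) * (?p * (1 - ?p) ^ (n - 1))"
    by (intro mult_left_mono) auto
  then have "ea_success_lb n (n - onemax x) \<le> real (n - onemax x) * (?p * (1 - ?p) ^ (n - 1))"
    by (simp add: ea_success_lb_def)
  also have "\<dots> \<le> measure_pmf.prob (ea_iter n x) {y. onemax x < onemax y}"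
    using measure_ea_iter_improve[OF assms(1)] by simp
  finally show ?thesis .
qed

section \<open>Success probability of the (1+(lambda,lambda)) GA\<close>

lemma measure_flip_exactly_no_gain:
  assumes "length x = n" "l \<le> n"
  shows "measure_pmf.prob (flip_exactly l x) {m. gained_positions x m = {}} \<le>
    (real (onemax x) / real n) ^ l"
proof -
  let ?Subs = "{S. S \<subseteq> {..<n} \<and> card S = l}"
  let ?flip = "\<lambda>S. map (\<lambda>i. if i \<in> S then \<not> x ! i else x ! i) [0..<n]"
  let ?O = "{i. i < n \<and> x ! i}"
  have fin: "finite ?Subs"
    by (rule finite_subset[of _ "Pow {..<n}"]) auto
  have "?Subs \<noteq> {}"
    using assms obtain_subset_with_card_n[of l "{..<n}"] by auto
  moreover have "?Subs \<inter> ?flip -` {m. gained_positions x m = {}} = {S. S \<subseteq> ?O \<and> card S = l}"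
    using assms(1) by (auto simp: gained_positions_def subset_iff)
  ultimately have "measure_pmf.prob (flip_exactly l x) {m. gained_positions x m = {}} =
      real (card {S. S \<subseteq> ?O \<and> card S = l}) / real (card ?Subs)"
    unfolding flip_exactly_def measure_map_pmf using fin assms(1)
    by (simp add: measure_pmf_of_set)
  also have "\<dots> = real (onemax x choose l) / real (n choose l)"
    using n_subsets[of ?O l] n_subsets[of "{..<n}" l] assms(1) by (simp add: onemax_eq_card)
  also have "\<dots> \<le> (real (onemax x) / real n) ^ l"
    using choose_mult_power_le[of "onemax x" n l] onemax_le_length[of x] assms
    by (cases "n = 0") (simp_all add: field_simps power_divide)
  finally show ?thesis .
qed

lemma measure_best_mutant_gains:
  assumes "length x = n" "l \<le> n"
  shows "1 - (real (onemax x) / real n) ^ (l * k) \<le>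
    measure_pmf.prob (bind_pmf (iid_list k (flip_exactly l x)) best_of)
      {x'. length x' = n \<and> card (diff_positions x x') = l \<and> gained_positions x x' \<noteq> {}}"
proof -
  let ?F = "flip_exactly l x" and ?G = "{m. gained_positions x m \<noteq> {}}"
  have "1 - measure_pmf.prob ?F ?G = measure_pmf.prob ?F {m. gained_positions x m = {}}"
    using measure_pmf_Compl[of ?F ?G] by (simp add: Compl_eq)
  also have "\<dots> \<le> (real (onemax x) / real n) ^ l"
    using assms by (rule measure_flip_exactly_no_gain)
  finally have "1 - ((real (onemax x) / real n) ^ l) ^ k \<le> 1 - (1 - measure_pmf.prob ?F ?G) ^ k"
    by (simp add: power_mono)
  also have "\<dots> \<le> measure_pmf.prob (bind_pmf (iid_list k ?F) best_of)
      {x'. length x' = n \<and> card (diff_positions x x') = l \<and> gained_positions x x' \<noteq> {}}"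
  proof (rule measure_best_of_iid_list_ge)
    fix a y assume a: "a \<in> ?G" "a \<in> set_pmf ?F" and y: "y \<in> set_pmf ?F" "onemax a \<le> onemax y"
    have lengths: "length a = n" "card (diff_positions x a) = l"
        "length y = n" "card (diff_positions x y) = l"
      using assms set_pmf_flip_exactlyD[OF _ a(2)] set_pmf_flip_exactlyD[OF _ y(1)] by auto
    have "finite (gained_positions x a)"
      by (simp add: gained_positions_def)
    then have "0 < card (gained_positions x a)"
      using a(1) by (simp add: card_gt_0_iff)
    also have "\<dots> \<le> card (gained_positions x y)"
      using lengths y(2) assms(1) by (intro card_gained_positions_mono) auto
    finally show "y \<in> {x'. length x' = n \<and> card (diff_positions x x') = l \<and>
        gained_positions x x' \<noteq> {}}"
      using lengths by auto
  qed
  finally show ?thesis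
    by (simp add: power_mult)
qed

lemma measure_best_crossover_improves:
  assumes "length x' = length x" "j \<in> gained_positions x x'"
  shows "1 - (1 - 1 / real k * (1 - 1 / real k) ^ (card (diff_positions x x') - 1)) ^ k \<le>
    measure_pmf.prob (bind_pmf (iid_list k (crossover (1 / real k) x x')) best_of)
      {y. onemax x < onemax y}"
proof -
  let ?C = "crossover (1 / real k) x x'"
  have j: "j < length x" "\<not> x ! j" "x' ! j"
    using assms(2) by (auto simp: gained_positions_def)
  have "1 / real k \<le> 1"
    by (cases "k = 0") auto
  have "pmf ?C (x[j := x' ! j]) = 1 / real k * (1 - 1 / real k) ^ (card (diff_positions x x') - 1)"
    using pmf_crossover_single_switch[of "1 / real k" j x x'] \<open>1 / real k \<le> 1\<close> assms(1) j
    by simp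
  then have "measure_pmf.prob ?C {x[j := True]} =
      1 / real k * (1 - 1 / real k) ^ (card (diff_positions x x') - 1)"
    using j by (simp add: measure_pmf_single)
  moreover have "1 - (1 - measure_pmf.prob ?C {x[j := True]}) ^ k \<le>
      measure_pmf.prob (bind_pmf (iid_list k ?C) best_of) {y. onemax x < onemax y}"
    using j onemax_list_update_True[of j x] by (intro measure_best_of_iid_list_ge) auto
  ultimately show ?thesis
    by simp
qed

lemma measure_elitist_improve:
  "measure_pmf.prob (bind_pmf M (\<lambda>y. return_pmf (if onemax x \<le> onemax y then y else x)))
      {y. onemax x < onemax y} =
    measure_pmf.prob M {y. onemax x < onemax y}"
proof -
  have "(\<lambda>y. if onemax x \<le> onemax y then y else x) -` {y. onemax x < onemax y} =
      {y. onemax x < onemax y}"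
    by auto
  then show ?thesis
    by (simp add: map_pmf_def[symmetric])
qed

definition crossover_success_lb :: real where
  "crossover_success_lb = 1 - exp (- exp (-4))"

lemma crossover_success_lb_pos: "0 < crossover_success_lb"
  unfolding crossover_success_lb_def by simp

lemma crossover_success_lb_le_1: "crossover_success_lb \<le> 1"
  unfolding crossover_success_lb_def by simp

lemma crossover_success_lb_le:
  assumes "8 \<le> k" "l \<le> 3 * k"
  shows "crossover_success_lb \<le> 1 - (1 - 1 / real k * (1 - 1 / real k) ^ (l - 1)) ^ k"
proof -
  let ?x = "1 / real k"
  have "real (3 * k) * (?x + 2 * ?x\<^sup>2) = 3 + 6 / real k"
    using assms by (simp add: power2_eq_square field_simps)
  also have "\<dots> \<le> 4"
    using assms by (simp add: field_simps)
  finally have "exp (-4) \<le> exp (- (real (3 * k) * (?x + 2 * ?x\<^sup>2)))"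
    by simp
  also have "\<dots> \<le> (1 - ?x) ^ (3 * k)"
    using assms by (intro exp_le_one_minus_power) auto
  also have "\<dots> \<le> (1 - ?x) ^ (l - 1)"
    using assms by (intro power_decreasing) auto
  finally have "exp (- (?x * (1 - ?x) ^ (l - 1) * real k)) \<le> exp (- exp (-4))"
    using assms by simp
  moreover have "(1 - ?x * (1 - ?x) ^ (l - 1)) ^ k \<le> exp (- (?x * (1 - ?x) ^ (l - 1) * real k))"
    using assms by (intro one_minus_power_le_exp mult_le_one power_le_one) auto
  ultimately show ?thesis
    unfolding crossover_success_lb_def by linarith
qed

lemma set_pmf_ga_iter:
  assumes "y \<in> set_pmf (ga_iter n lam x)" "1 \<le> lam" "lam \<le> n" "length x = n"
  shows "length y = length x \<and> onemax x \<le> onemax y"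
proof -
  obtain l ms x' cs z where
    l: "l \<in> set_pmf (binomial_pmf n (real lam / real n))" and
    ms: "ms \<in> set_pmf (iid_list lam (flip_exactly l x))" "x' \<in> set_pmf (best_of ms)" and
    cs: "cs \<in> set_pmf (iid_list lam (crossover (1 / real lam) x x'))" "z \<in> set_pmf (best_of cs)" and
    y: "y = (if onemax z \<ge> onemax x then z else x)"
    using assms(1) unfolding ga_iter_def by auto
  have "l \<le> n"
    using l assms(2,3) by (auto simp: set_pmf_binomial_eq split: if_splits)
  have "ms \<noteq> []" "cs \<noteq> []"
    using ms(1) cs(1) assms(2) by (auto simp: set_pmf_iid_list)
  then have "x' \<in> set ms" "z \<in> set cs"
    using ms(2) cs(2) set_pmf_best_of(1) by blast+
  then have "length x' = length x" "length z = length x"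
    using ms(1) cs(1) \<open>l \<le> n\<close> assms(4)
    by (auto simp: set_pmf_iid_list dest: set_pmf_flip_exactlyD length_crossover)
  then show ?thesis
    using y by auto
qed

definition ga_success_lb :: "nat \<Rightarrow> nat \<Rightarrow> nat \<Rightarrow> real" where
  "ga_success_lb n lam d =
     crossover_success_lb / 2 * (1 - exp (- (real d * real lam * real lam / (8 * real n))))"

lemma ga_success_lb_pos: "1 \<le> d \<Longrightarrow> 1 \<le> n \<Longrightarrow> 1 \<le> lam \<Longrightarrow> 0 < ga_success_lb n lam d"
  using crossover_success_lb_pos by (simp add: ga_success_lb_def)

lemma ga_success_lb_le_1: "ga_success_lb n lam d \<le> 1"
proof -
  have "crossover_success_lb * (1 - exp (- (real d * real lam * real lam / (8 * real n)))) \<le> 1"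
    using crossover_success_lb_pos crossover_success_lb_le_1 by (intro mult_le_one) auto
  then show ?thesis
    by (simp add: ga_success_lb_def)
qed

lemma measure_mutation_phase_ge:
  assumes "length x = n" "l \<le> n" "0 < lam" "lam \<le> 8 * l"
  shows "1 - exp (- (real (n - onemax x) * real lam * real lam / (8 * real n))) \<le>
    measure_pmf.prob (bind_pmf (iid_list lam (flip_exactly l x)) best_of)
      {x'. length x' = n \<and> card (diff_positions x x') = l \<and> gained_positions x x' \<noteq> {}}"
proof -
  let ?d = "real (n - onemax x)"
  have "(real (onemax x) / real n) ^ (l * lam) = (1 - ?d / real n) ^ (l * lam)"
    using assms onemax_le_length[of x] by (simp add: field_simps of_nat_diff)
  also have "\<dots> \<le> exp (- (?d / real n * real (l * lam)))"
    using assms by (intro one_minus_power_le_exp) auto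
  also have "\<dots> \<le> exp (- (?d * real lam * real lam / (8 * real n)))"
  proof -
    have "real lam * ?d \<le> 8 * real l * ?d"
      using assms(4) by (intro mult_right_mono) auto
    then show ?thesis
      using assms by (simp add: field_simps)
  qed
  finally show ?thesis
    using measure_best_mutant_gains[OF assms(1,2), of lam] by simp
qed

lemma crossover_success_lb_le_measure_crossover_phase:
  assumes "8 \<le> lam" "length x' = length x" "gained_positions x x' \<noteq> {}"
    "card (diff_positions x x') \<le> 3 * lam"
  shows "crossover_success_lb \<le> measure_pmf.prob
    (bind_pmf (bind_pmf (iid_list lam (crossover (1 / real lam) x x')) best_of)
      (\<lambda>y. return_pmf (if onemax x \<le> onemax y then y else x))) {y. onemax x < onemax y}"
proof -
  obtain j where "j \<in> gained_positions x x'"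
    using assms(3) by blast
  then show ?thesis
    using assms crossover_success_lb_le[of lam "card (diff_positions x x')"]
      measure_best_crossover_improves[of x' x j lam]
    by (simp add: measure_elitist_improve)
qed

lemma ga_success_lb_le_measure_ga_iter:
  assumes "length x = n" "8 \<le> lam" "lam \<le> n"
  shows "ga_success_lb n lam (n - onemax x) \<le>
    measure_pmf.prob (ga_iter n lam x) {y. onemax x < onemax y}"
proof -
  let ?c = crossover_success_lb
  let ?E = "1 - exp (- (real (n - onemax x) * real lam * real lam / (8 * real n)))"
  let ?L = "{l. lam \<le> 8 * l \<and> l \<le> 3 * lam}"
  let ?good = "\<lambda>l. {x'. length x' = n \<and> card (diff_positions x x') = l \<and>
      gained_positions x x' \<noteq> {}}"
  let ?mutant = "\<lambda>l. bind_pmf (iid_list lam (flip_exactly l x)) best_of"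
  have "ga_success_lb n lam (n - onemax x) = ?c * ?E * (1/2)"
    by (simp add: ga_success_lb_def)
  also have "\<dots> \<le> ?c * ?E * measure_pmf.prob (binomial_pmf n (real lam / real n)) ?L"
    using binomial_pmf_concentration[OF assms(2,3)] crossover_success_lb_pos
    by (intro mult_left_mono) auto
  also have "\<dots> \<le> measure_pmf.prob (ga_iter n lam x) {y. onemax x < onemax y}"
    unfolding ga_iter_def
  proof (rule measure_bind_pmf_ge)
    fix l assume l: "l \<in> set_pmf (binomial_pmf n (real lam / real n))" "l \<in> ?L"
    have "l \<le> n"
      using l(1) assms by (auto simp: set_pmf_binomial_eq split: if_splits)
    then have "?c * ?E \<le> ?c * measure_pmf.prob (?mutant l) (?good l)"
      using measure_mutation_phase_ge[OF assms(1)] l(2) assms(2) crossover_success_lb_pos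
      by (intro mult_left_mono) auto
    also have "\<dots> \<le> measure_pmf.prob (bind_pmf (?mutant l) (\<lambda>x'.
        bind_pmf (bind_pmf (iid_list lam (crossover (1 / real lam) x x')) best_of)
          (\<lambda>y. return_pmf (if onemax x \<le> onemax y then y else x)))) {y. onemax x < onemax y}"
      using l(2) assms crossover_success_lb_pos
      by (intro measure_bind_pmf_ge crossover_success_lb_le_measure_crossover_phase) auto
    finally show "?c * ?E \<le> \<dots>" .
  qed (use crossover_success_lb_pos in simp)
  finally show ?thesis .
qed

section \<open>A potential for the hyper-heuristic\<close>

definition hh_success_lb :: "nat \<Rightarrow> nat \<Rightarrow> nat \<Rightarrow> nat \<Rightarrow> real" where
  "hh_success_lb n lam d c = (if c < lam then ea_success_lb n d else ga_success_lb n lam d)"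

text \<open>An upper bound for the expected cost of leaving the level with \<open>d\<close> zero-bits after \<open>c\<close>
  unsuccessful iterations on it, with \<open>p = ea_success_lb n d\<close> and \<open>q = ga_success_lb n lam d\<close>:
  at most \<open>min (lam - c) (1/p)\<close> further EA iterations and, if all \<open>lam - c\<close> of them fail,
  a GA phase of expected length \<open>1/q\<close> at cost \<open>2 lam\<close> per iteration.\<close>
definition level_potential :: "nat \<Rightarrow> nat \<Rightarrow> nat \<Rightarrow> nat \<Rightarrow> real" where
  "level_potential n lam d c =
     min (real (lam - c)) (1 / ea_success_lb n d) +
     (1 - ea_success_lb n d) ^ (lam - c) * (2 * real lam / ga_success_lb n lam d)"

definition hh_potential :: "nat \<Rightarrow> nat \<Rightarrow> bool list \<times> nat \<Rightarrow> ennreal" where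
  "hh_potential n lam s =
     (if onemax (fst s) < n
      then ennreal (level_potential n lam (n - onemax (fst s)) (snd s) +
        (\<Sum>j\<in>{1..<n - onemax (fst s)}. level_potential n lam j 0))
      else 0)"

lemma level_potential_nonneg:
  assumes "1 \<le> d" "d \<le> n" "1 \<le> lam"
  shows "0 \<le> level_potential n lam d c"
  using assms ea_success_lb_pos[of d n] ea_success_lb_le_1[of d n] ga_success_lb_pos[of d n lam]
  by (simp add: level_potential_def)

lemma level_potential_step:
  assumes "c \<le> lam" "1 \<le> d" "d \<le> n" "1 \<le> lam"
  shows "real (hh_cost lam (x, c)) +
      (1 - hh_success_lb n lam d c) * level_potential n lam d (min lam (Suc c)) \<le>
    level_potential n lam d c"
proof (cases "c < lam")
  case True
  let ?p = "ea_success_lb n d" and ?G = "2 * real lam / ga_success_lb n lam d"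
  let ?L = "real (lam - c)"
  have p: "0 < ?p" "?p \<le> 1"
    using assms ea_success_lb_pos ea_success_lb_le_1 by auto
  have key: "1 + (1 - ?p) * min (?L - 1) (1 / ?p) \<le> min ?L (1 / ?p)"
    using p True by (intro one_add_mult_min_le_min) auto
  have "level_potential n lam d (Suc c) = min (?L - 1) (1 / ?p) + (1 - ?p) ^ (lam - Suc c) * ?G"
    using True by (simp add: level_potential_def of_nat_diff)
  then have "1 + (1 - ?p) * level_potential n lam d (Suc c) =
      (1 + (1 - ?p) * min (?L - 1) (1 / ?p)) + ((1 - ?p) * (1 - ?p) ^ (lam - Suc c)) * ?G"
    by (simp add: distrib_left mult.assoc)
  also have "\<dots> \<le> min ?L (1 / ?p) + (1 - ?p) ^ (lam - c) * ?G"
    using key True by (simp add: Suc_diff_Suc flip: power_Suc)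
  also have "\<dots> = level_potential n lam d c"
    by (simp add: level_potential_def)
  finally show ?thesis
    using True by (simp add: hh_cost_def hh_success_lb_def)
next
  case False
  then have "c = lam" "0 < ga_success_lb n lam d" "0 < ea_success_lb n d"
    using assms ga_success_lb_pos ea_success_lb_pos by auto
  then show ?thesis
    by (simp add: hh_cost_def hh_success_lb_def level_potential_def field_simps)
qed

lemma sum_level_potential_mono:
  assumes "d' \<le> d" "d \<le> Suc n" "1 \<le> lam"
  shows "(\<Sum>j\<in>{1..<d'}. level_potential n lam j 0) \<le> (\<Sum>j\<in>{1..<d}. level_potential n lam j 0)"
  using assms by (intro sum_mono2) (auto intro: level_potential_nonneg)

lemma nn_integral_hh_potential_le:
  assumes "1 \<le> lam" "onemax x < n"
    and mono: "\<And>y. y \<in> set_pmf M \<Longrightarrow> onemax x \<le> onemax y"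
    and r: "r \<le> measure_pmf.prob M {y. onemax x < onemax y}"
  shows "(\<integral>\<^sup>+y. hh_potential n lam (y, if onemax x < onemax y then 0 else c') \<partial>M) \<le>
    ennreal ((\<Sum>j\<in>{1..<n - onemax x}. level_potential n lam j 0) +
      (1 - r) * level_potential n lam (n - onemax x) c')"
proof -
  let ?d = "n - onemax x" and ?A = "{y. \<not> onemax x < onemax y}"
  let ?S = "\<Sum>j\<in>{1..<?d}. level_potential n lam j 0" and ?h = "level_potential n lam ?d c'"
  have h: "0 \<le> ?h"
    using assms by (intro level_potential_nonneg) auto
  have S: "0 \<le> ?S"
    using assms by (intro sum_nonneg level_potential_nonneg) auto
  have "hh_potential n lam (y, if onemax x < onemax y then 0 else c') \<le>
      ennreal ?S + ennreal ?h * indicator ?A y" if "y \<in> set_pmf M" for y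
  proof (cases "onemax x < onemax y")
    case True
    have "level_potential n lam (n - onemax y) 0 +
        (\<Sum>j\<in>{1..<n - onemax y}. level_potential n lam j 0) \<le> ?S"
      if "onemax y < n"
      using sum_level_potential_mono[of "Suc (n - onemax y)" ?d n lam] True that assms(1)
      by (simp add: add.commute)
    then show ?thesis
      using True by (auto simp: hh_potential_def ennreal_leI)
  next
    case False
    then show ?thesis
      using mono[OF that] assms(2) h S by (simp add: hh_potential_def ennreal_plus)
  qed
  then have "(\<integral>\<^sup>+y. hh_potential n lam (y, if onemax x < onemax y then 0 else c') \<partial>M) \<le>
      (\<integral>\<^sup>+y. ennreal ?S + ennreal ?h * indicator ?A y \<partial>M)"
    by (intro nn_integral_mono_AE) (auto simp: AE_measure_pmf_iff)
  also have "\<dots> = ennreal (?S + (1 - measure_pmf.prob M {y. onemax x < onemax y}) * ?h)"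
    using measure_pmf_Compl[of M "{y. onemax x < onemax y}"] h S
    by (simp add: nn_integral_add nn_integral_cmult_indicator measure_pmf.emeasure_eq_measure
        Compl_eq ennreal_mult ennreal_plus mult.commute)
  also have "\<dots> \<le> ennreal (?S + (1 - r) * ?h)"
    using r h by (intro ennreal_leI add_left_mono mult_right_mono) auto
  finally show ?thesis .
qed

lemma hh_iteration_elitist:
  fixes c :: nat
  assumes "2 \<le> n" "8 \<le> lam" "lam \<le> n" "length x = n"
  defines "M \<equiv> if c < lam then ea_iter n x else ga_iter n lam x"
  shows "\<And>y. y \<in> set_pmf M \<Longrightarrow> length y = n \<and> onemax x \<le> onemax y"
    and "hh_success_lb n lam (n - onemax x) c \<le> measure_pmf.prob M {y. onemax x < onemax y}"
  using assms set_pmf_ea_iter set_pmf_ga_iter[of _ n lam x]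
    ea_success_lb_le_measure_ea_iter[OF assms(4,1)]
    ga_success_lb_le_measure_ga_iter[OF assms(4,2,3)]
  by (auto simp: hh_success_lb_def split: if_splits)

lemma hh_potential_drift:
  assumes "2 \<le> n" "8 \<le> lam" "lam \<le> n" "length x = n" "c \<le> lam"
  shows "(if onemax x = n then 0 else ennreal (real (hh_cost lam (x, c)))) +
      (\<integral>\<^sup>+s. hh_potential n lam s \<partial>hh_step n lam (x, c)) \<le> hh_potential n lam (x, c)"
proof -
  let ?M = "if c < lam then ea_iter n x else ga_iter n lam x"
  let ?c' = "min lam (Suc c)"
  have step: "hh_step n lam (x, c) = map_pmf (\<lambda>y. (y, if onemax x < onemax y then 0 else ?c')) ?M"
    by (simp add: hh_step_def)
  have mono: "onemax x \<le> onemax y" if "y \<in> set_pmf ?M" for y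
    using that hh_iteration_elitist(1)[OF assms(1-4)] by blast
  show ?thesis
  proof (cases "onemax x < n")
    case False
    then have "\<not> onemax y < n" if "y \<in> set_pmf ?M" for y
      using mono[OF that] by linarith
    then have "AE s in hh_step n lam (x, c). hh_potential n lam s = 0"
      by (auto simp: step AE_measure_pmf_iff hh_potential_def)
    then show ?thesis
      using False assms(4) onemax_le_length[of x]
      by (simp add: nn_integral_cong_AE hh_potential_def)
  next
    case True
    let ?d = "n - onemax x"
    let ?S = "\<Sum>j\<in>{1..<?d}. level_potential n lam j 0"
    let ?q = "hh_success_lb n lam ?d c" and ?cost = "real (hh_cost lam (x, c))"
    have q: "?q \<le> measure_pmf.prob ?M {y. onemax x < onemax y}"
      using hh_iteration_elitist(2)[OF assms(1-4)] .
    have d: "1 \<le> ?d" "?d \<le> n"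
      using True by auto
    have nonneg: "0 \<le> ?S" "0 \<le> (1 - ?q) * level_potential n lam ?d ?c'"
      using d assms ga_success_lb_le_1 ea_success_lb_le_1[OF d(2)]
      by (auto simp: hh_success_lb_def intro!: sum_nonneg level_potential_nonneg mult_nonneg_nonneg)
    have "(\<integral>\<^sup>+s. hh_potential n lam s \<partial>hh_step n lam (x, c)) \<le>
        ennreal (?S + (1 - ?q) * level_potential n lam ?d ?c')"
      unfolding step nn_integral_map_pmf
      using assms by (intro nn_integral_hh_potential_le[OF _ True mono q]) simp
    then have "ennreal ?cost + (\<integral>\<^sup>+s. hh_potential n lam s \<partial>hh_step n lam (x, c)) \<le>
        ennreal ?cost + ennreal (?S + (1 - ?q) * level_potential n lam ?d ?c')"
      by (rule add_left_mono)
    also have "\<dots> = ennreal (?cost + (1 - ?q) * level_potential n lam ?d ?c' + ?S)"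
      using nonneg by (subst ennreal_plus[symmetric]) (auto simp: ac_simps)
    also have "\<dots> \<le> ennreal (level_potential n lam ?d c + ?S)"
      using level_potential_step[of c lam ?d n x] assms d by (intro ennreal_leI) auto
    finally show ?thesis
      using True by (simp add: hh_potential_def)
  qed
qed

lemma set_pmf_hh_step:
  assumes "s' \<in> set_pmf (hh_step n lam s)" "2 \<le> n" "8 \<le> lam" "lam \<le> n"
    and "length (fst s) = n" "snd s \<le> lam"
  shows "length (fst s') = n \<and> snd s' \<le> lam"
proof -
  obtain x c where s: "s = (x, c)"
    by fastforce
  then obtain y where "y \<in> set_pmf (if c < lam then ea_iter n x else ga_iter n lam x)"
      "s' = (y, if onemax x < onemax y then 0 else min lam (Suc c))"
    using assms(1) by (auto simp: hh_step_def)
  moreover have "length x = n"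
    using assms(5) s by simp
  ultimately show ?thesis
    using hh_iteration_elitist(1)[OF assms(2-4), where c = c] assms(6) s by auto
qed

lemma hh_runtime_le_sum_level_potential:
  assumes "2 \<le> n" "8 \<le> lam" "lam \<le> n"
  shows "hh_runtime n lam \<le> ennreal (\<Sum>d\<in>{1..n}. level_potential n lam d 0)"
proof -
  let ?U = "{xs :: bool list. length xs = n}"
  have "finite ?U" "?U \<noteq> {}"
    using finite_lists_length_eq[of "UNIV :: bool set" n] by auto (metis length_replicate)
  then have init: "set_pmf (hh_dist n lam 0) = (\<lambda>x. (x, 0)) ` ?U"
    by (simp add: hh_dist_def)
  have "hh_runtime n lam \<le> (\<integral>\<^sup>+s. hh_potential n lam s \<partial>hh_dist n lam 0)"
    unfolding hh_runtime_def
  proof (rule suminf_nn_integral_le_potential[where I = "{s. length (fst s) = n \<and> snd s \<le> lam}"])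
    show "hh_dist n lam (Suc t) = bind_pmf (hh_dist n lam t) (hh_step n lam)" for t
      by (simp add: hh_dist_def)
    show "(if onemax (fst s) = n then 0 else ennreal (real (hh_cost lam s))) +
        (\<integral>\<^sup>+y. hh_potential n lam y \<partial>hh_step n lam s) \<le> hh_potential n lam s"
      if "s \<in> {s. length (fst s) = n \<and> snd s \<le> lam}" for s
    proof -
      obtain x c where "s = (x, c)"
        by fastforce
      then show ?thesis
        using that hh_potential_drift[OF assms, of x c] by (simp split: if_splits)
    qed
  qed (use init assms set_pmf_hh_step in auto)
  also have "\<dots> \<le> (\<integral>\<^sup>+s. ennreal (\<Sum>d\<in>{1..n}. level_potential n lam d 0) \<partial>hh_dist n lam 0)"
  proof (intro nn_integral_mono_AE, unfold AE_measure_pmf_iff, intro ballI)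
    fix s assume "s \<in> set_pmf (hh_dist n lam 0)"
    then obtain x where "s = (x, 0)"
      using init by auto
    moreover have "level_potential n lam (n - onemax x) 0 +
        (\<Sum>j\<in>{1..<n - onemax x}. level_potential n lam j 0) \<le>
        (\<Sum>d\<in>{1..<Suc n}. level_potential n lam d 0)" if "onemax x < n"
      using that assms sum_level_potential_mono[of "Suc (n - onemax x)" "Suc n" n lam]
      by (simp add: sum.op_ivl_Suc add.commute)
    ultimately show "hh_potential n lam s \<le> ennreal (\<Sum>d\<in>{1..n}. level_potential n lam d 0)"
      by (auto simp: hh_potential_def atLeastLessThanSuc_atLeastAtMost ennreal_leI)
  qed
  also have "\<dots> = ennreal (\<Sum>d\<in>{1..n}. level_potential n lam d 0)"
    by (simp add: measure_pmf.emeasure_space_1)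
  finally show ?thesis .
qed

section \<open>Summing the level costs\<close>

lemma level_potential_le:
  assumes "1 \<le> d" "d \<le> n" "1 \<le> lam"
  shows "level_potential n lam d 0 \<le>
    2 * (real n * exp 2) * (1 / (real d + real n * exp 2 / real lam)) +
    4 * real lam / crossover_success_lb * exp (- (real lam * exp (-2) / real n * real d)) +
    32 * real n / (crossover_success_lb * real lam) * (1 / real d)"
proof -
  let ?p = "ea_success_lb n d" and ?c = "crossover_success_lb"
  let ?E = "exp (- (real lam * exp (-2) / real n * real d))"
  let ?y = "real d * real lam * real lam / (8 * real n)"
  have pos: "0 < real n" "0 < real d" "0 < real lam" "0 < ?c" "0 < ?y"
    using assms crossover_success_lb_pos by auto
  have "min (real lam) (1 / ?p) \<le> 2 / (1 / real lam + 1 / (1 / ?p))"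
    using pos by (intro min_le_harmonic_mean) (auto simp: ea_success_lb_def)
  also have "\<dots> = 2 * (real n * exp 2) * (1 / (real d + real n * exp 2 / real lam))"
    using pos by (simp add: ea_success_lb_def exp_minus field_simps)
  finally have EA: "min (real lam) (1 / ?p) \<le> \<dots>" .
  have "(1 - ?p) ^ lam \<le> ?E"
    using one_minus_power_le_exp[of ?p lam] ea_success_lb_le_1[OF assms(2)]
    by (simp add: ea_success_lb_def mult_ac)
  moreover have "2 * real lam / ga_success_lb n lam d \<le> 4 * real lam / ?c * (1 + 1 / ?y)"
  proof -
    have "2 * real lam / ga_success_lb n lam d = 4 * real lam / ?c * (1 / (1 - exp (- ?y)))"
      using pos by (simp add: ga_success_lb_def field_simps)
    then show ?thesis
      using pos inverse_one_minus_exp_neg_le[of ?y] by (simp only:) (intro mult_left_mono; simp)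
  qed
  ultimately have "(1 - ?p) ^ lam * (2 * real lam / ga_success_lb n lam d) \<le>
      ?E * (4 * real lam / ?c * (1 + 1 / ?y))"
    using pos ea_success_lb_le_1[OF assms(2)] ga_success_lb_pos[of d n lam] assms
    by (intro mult_mono) auto
  also have "\<dots> = 4 * real lam / ?c * ?E + ?E * (4 * real lam / ?c / ?y)"
    by (simp add: algebra_simps)
  also have "\<dots> \<le> 4 * real lam / ?c * ?E + 4 * real lam / ?c / ?y"
    using pos by (intro add_left_mono mult_left_le_one_le) auto
  also have "4 * real lam / ?c / ?y = 32 * real n / (?c * real lam) * (1 / real d)"
    using pos by (simp add: field_simps)
  finally show ?thesis
    using EA by (simp add: level_potential_def)
qed

lemma sum_level_potential_le:
  assumes "1 \<le> n" "1 \<le> lam"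
  shows "(\<Sum>d\<in>{1..n}. level_potential n lam d 0) \<le>
    2 * exp 2 * real n * ln (1 + real lam) + 4 * exp 2 * real n / crossover_success_lb +
    64 * real n * ln (real n + 1) / (crossover_success_lb * real lam)"
proof -
  let ?a = "real n * exp 2" and ?c = "crossover_success_lb"
  let ?b = "?a / real lam" and ?t = "real lam * exp (-2) / real n"
  have pos: "0 < real n" "0 < real lam" "0 < ?b" "0 < ?t" "0 < ?c"
    using assms crossover_success_lb_pos by auto
  have EA: "(\<Sum>d\<in>{1..n}. 1 / (real d + ?b)) \<le> ln (1 + real lam)"
  proof -
    have "(\<Sum>d\<in>{1..n}. 1 / (real d + ?b)) \<le> ln (real n + ?b) - ln ?b"
      using pos by (intro sum_inverse_add_le_ln)
    also have "\<dots> = ln ((real n + ?b) / ?b)"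
      using pos by (intro ln_divide_pos[symmetric] add_pos_pos) auto
    also have "\<dots> = ln (1 + real lam / exp 2)"
      using pos by (intro arg_cong[where f = ln]) (simp add: field_simps)
    also have "\<dots> \<le> ln (1 + real lam)"
      using pos by (simp add: divide_le_eq one_le_exp_iff mult_le_cancel_left1 add_pos_nonneg)
    finally show ?thesis .
  qed
  have GA: "(\<Sum>d\<in>{1..n}. exp (- (?t * real d))) \<le> 1 / ?t"
    using pos by (intro sum_exp_neg_mult_le)
  have harmonic: "(\<Sum>d\<in>{1..n}. 1 / real d) \<le> 2 * ln (real n + 1)"
  proof -
    have "(\<Sum>d\<in>{1..n}. 1 / real d) \<le> (\<Sum>d\<in>{1..n}. 2 * (1 / (real d + 1)))"
      by (intro sum_mono) (auto simp: field_simps)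
    also have "\<dots> = 2 * (\<Sum>d\<in>{1..n}. 1 / (real d + 1))"
      by (simp add: sum_distrib_left)
    also have "\<dots> \<le> 2 * (ln (real n + 1) - ln 1)"
      using sum_inverse_add_le_ln[of 1 n] by simp
    finally show ?thesis
      by simp
  qed
  have "(\<Sum>d\<in>{1..n}. level_potential n lam d 0) \<le> (\<Sum>d\<in>{1..n}.
      2 * ?a * (1 / (real d + ?b)) + 4 * real lam / ?c * exp (- (?t * real d)) +
      32 * real n / (?c * real lam) * (1 / real d))"
    using assms by (intro sum_mono level_potential_le) auto
  also have "\<dots> = 2 * ?a * (\<Sum>d\<in>{1..n}. 1 / (real d + ?b)) +
      4 * real lam / ?c * (\<Sum>d\<in>{1..n}. exp (- (?t * real d))) +
      32 * real n / (?c * real lam) * (\<Sum>d\<in>{1..n}. 1 / real d)"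
    by (simp add: sum.distrib sum_distrib_left)
  also have "\<dots> \<le> 2 * ?a * ln (1 + real lam) + 4 * real lam / ?c * (1 / ?t) +
      32 * real n / (?c * real lam) * (2 * ln (real n + 1))"
    using pos EA GA harmonic by (intro add_mono mult_left_mono) auto
  also have "\<dots> = 2 * exp 2 * real n * ln (1 + real lam) + 4 * exp 2 * real n / ?c +
      64 * real n * ln (real n + 1) / (?c * real lam)"
    using pos by (simp add: field_simps exp_minus)
  finally show ?thesis .
qed

lemma runtime_bound_le_n_ln_ln:
  fixes x l c1 c2 :: real
  assumes "0 < c1" "2 \<le> x" "exp 1 \<le> ln x" "c1 * ln x \<le> l" "l \<le> c2 * ln x"
  shows "2 * exp 2 * x * ln (1 + l) + 4 * exp 2 * x / crossover_success_lb +
      64 * x * ln (x + 1) / (crossover_success_lb * l) \<le>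
    (2 * exp 2 * (ln (1 + c2) + 1) + 4 * exp 2 / crossover_success_lb +
      128 / (crossover_success_lb * c1)) * x * ln (ln x)"
proof -
  let ?c = crossover_success_lb and ?L = "ln x"
  have c: "0 < ?c"
    by (rule crossover_success_lb_pos)
  have "1 \<le> exp (1::real)"
    by simp
  then have L: "1 \<le> ?L"
    using assms(3) by linarith
  then have LL: "1 \<le> ln ?L"
    using assms(3) by (subst ln_ge_iff) auto
  have "0 < c1 * ?L"
    using assms(1) L by simp
  then have l: "0 < l"
    using assms(4) by linarith
  have "2 * exp 2 * x * ln (1 + l) \<le> 2 * exp 2 * x * ((ln (1 + c2) + 1) * ln ?L)"
    using ln_one_plus_le_ln_ln[of l c2 ?L] assms l by (intro mult_left_mono) auto
  moreover have "4 * exp 2 * x / ?c \<le> 4 * exp 2 / ?c * x * ln ?L"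
    using mult_left_mono[OF LL, of "4 * exp 2 / ?c * x"] assms c by simp
  moreover have "64 * x * ln (x + 1) / (?c * l) \<le> 128 / (?c * c1) * x * ln ?L"
  proof -
    have "64 * x * ln (x + 1) / (?c * l) \<le> 64 * x * (2 * ?L) / (?c * (c1 * ?L))"
      using ln_add_one_le_two_ln[OF assms(2)] assms c L
      by (intro frac_le mult_left_mono mult_pos_pos) auto
    also have "\<dots> = 128 / (?c * c1) * x * 1"
      using L by (simp add: field_simps)
    also have "\<dots> \<le> 128 / (?c * c1) * x * ln ?L"
      using LL assms c by (intro mult_left_mono) auto
    finally show ?thesis .
  qed
  ultimately show ?thesis
    by (simp add: algebra_simps)
qed

lemma hh_runtime_le_n_ln_ln:
  assumes "0 < c1" "2 \<le> n" "exp 1 \<le> ln (real n)" "8 \<le> lam" "lam \<le> n"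
    and "c1 * ln (real n) \<le> real lam" "real lam \<le> c2 * ln (real n)"
  shows "hh_runtime n lam \<le> ennreal ((2 * exp 2 * (ln (1 + c2) + 1) +
      4 * exp 2 / crossover_success_lb + 128 / (crossover_success_lb * c1)) *
      real n * ln (ln (real n)))"
proof -
  have "hh_runtime n lam \<le> ennreal (\<Sum>d\<in>{1..n}. level_potential n lam d 0)"
    using assms by (intro hh_runtime_le_sum_level_potential) auto
  also have "\<dots> \<le> ennreal (2 * exp 2 * real n * ln (1 + real lam) +
      4 * exp 2 * real n / crossover_success_lb +
      64 * real n * ln (real n + 1) / (crossover_success_lb * real lam))"
    using assms by (intro ennreal_leI sum_level_potential_le) auto
  also have "\<dots> \<le> ennreal ((2 * exp 2 * (ln (1 + c2) + 1) + 4 * exp 2 / crossover_success_lb +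
      128 / (crossover_success_lb * c1)) * real n * ln (ln (real n)))"
    using assms by (intro ennreal_leI runtime_bound_le_n_ln_ln) auto
  finally show ?thesis .
qed

theorem theorem6p1:
  fixes lam :: "nat \<Rightarrow> nat"
  assumes "\<forall>n\<ge>1. 1 \<le> lam n \<and> lam n \<le> n"
    and "(\<lambda>n. real (lam n)) \<in> \<Theta>(\<lambda>n. ln (real n))"
  shows "\<exists>C N. \<forall>n\<ge>N. hh_runtime n (lam n) \<le> ennreal (C * real n * ln (ln (real n)))"
proof -
  have "(\<lambda>n. real (lam n)) \<in> \<Omega>(\<lambda>n. ln (real n))" "(\<lambda>n. real (lam n)) \<in> O(\<lambda>n. ln (real n))"
    using assms(2) by auto
  then obtain c1 c2 where "0 < c1"
    and lower: "eventually (\<lambda>n. c1 * norm (ln (real n)) \<le> norm (real (lam n))) at_top"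
    and upper: "eventually (\<lambda>n. norm (real (lam n)) \<le> c2 * norm (ln (real n))) at_top"
    by (elim landau_omega.bigE landau_o.bigE)
  have large: "eventually (\<lambda>n::nat. 2 \<le> n \<and> exp 1 \<le> ln (real n) \<and> 8 / c1 \<le> ln (real n)) at_top"
    by (intro eventually_conj) real_asymp+
  define C where "C = 2 * exp 2 * (ln (1 + c2) + 1) + 4 * exp 2 / crossover_success_lb +
    128 / (crossover_success_lb * c1)"
  from lower upper large have
    "eventually (\<lambda>n. hh_runtime n (lam n) \<le> ennreal (C * real n * ln (ln (real n)))) at_top"
  proof eventually_elim
    case (elim n)
    then have "8 \<le> lam n" "lam n \<le> n"
      using \<open>0 < c1\<close> assms(1) by (auto simp: field_simps)
    with elim \<open>0 < c1\<close> show ?case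
      unfolding C_def by (intro hh_runtime_le_n_ln_ln) auto
  qed
  then show ?thesis
    by (auto simp: eventually_at_top_linorder)
qed

end
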